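(* Let $N\ge1$, let $\mathbf{K}\in\mathbb{R}^{N\times N}$ be the cyclic shift matrix ($(\mathbf{K}\mathbf{x})_1=x_N$, $(\mathbf{K}\mathbf{x})_i=x_{i-1}$ for $i\ge2$), so $\mathbf{K}^{-1}=\mathbf{K}^T$, let $\mathbf{K}(\nu)=(1-\nu)\mathbf{I}+\nu\mathbf{K}$, and $\mathbf{L}_h=N^2(\mathbf{K}+\mathbf{K}^T-2\mathbf{I})$. For $\tilde\nu\in\mathbb{R}$ with integer part $s=\lfloor\tilde\nu\rfloor$ and fractional part $\nu=\tilde\nu-s$, define $\mathcal{K}(\tilde\nu)=\mathbf{K}^s\mathbf{K}(\nu)$ (with $\mathbf{K}^s=(\mathbf{K}^T)^{-s}$ for $s<0$). Let $\tilde\nu,\tilde\omega\in\mathbb{R}$ with fractional parts $\nu=\tilde\nu-\lfloor\tilde\nu\rfloor$, $\omega=\tilde\omega-\lfloor\tilde\omega\rfloor$. Then (a) $\mathcal{K}(\tilde\nu)\mathcal{K}(\tilde\omega)=\mathcal{K}(\tilde\omega)\mathcal{K}(\tilde\nu)$; (b) $\mathcal{K}(\tilde\nu)\mathcal{K}(\tilde\omega)^T=\mathcal{K}(\tilde\omega)^T\mathcal{K}(\tilde\nu)$; (c) if $0\le\nu,\omega\le1$ and $\nu+\omega\le1$, then $\mathcal{K}(\tilde\nu)\mathcal{K}(\tilde\omega)=\mathcal{K}(\tilde\nu+\tilde\omega)+\frac{1}{N^2}\mathbf{C}$, where $\mathbf{C}$ is a scalar multiple of a shifted discrete Laplacian $\mathbf{K}^m\mathbf{L}_h$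 for some integer $m$; (d) for every $\mathbf{u}\in\mathbb{R}^N$, $\sum_{j=1}^N u_j=\sum_{j=1}^N(\mathcal{K}(\tilde\nu)\mathbf{u})_j$.
   Context: $\mathbf{I}$ is the $N\times N$ identity; $\mathcal{K}(\tilde\nu)$ is an upwind-type (large time-step) transport by a real shift $\tilde\nu$: an integer cyclic shift followed by linear interpolation between neighbouring cells. *)

theory Defs
  imports Complex_Main "Jordan_Normal_Form.Matrix"
begin

text \<open>Indices are 0-based: entries 0..N-1. The cyclic shift satisfies
  (K x)_0 = x_(N-1) and (K x)_i = x_(i-1) for i >= 1.\<close>

definition shiftK :: "nat \<Rightarrow> real mat" where
  "shiftK N = mat N N (\<lambda>(i, j). if i = (j + 1) mod N then 1 else 0)"

definition shiftK_int :: "nat \<Rightarrow> int \<Rightarrow> real mat" where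
  "shiftK_int N s = (if 0 \<le> s then shiftK N ^\<^sub>m nat s
                     else (transpose_mat (shiftK N)) ^\<^sub>m nat (- s))"

definition Knu :: "nat \<Rightarrow> real \<Rightarrow> real mat" where
  "Knu N \<nu> = (1 - \<nu>) \<cdot>\<^sub>m 1\<^sub>m N + \<nu> \<cdot>\<^sub>m shiftK N"

definition calK :: "nat \<Rightarrow> real \<Rightarrow> real mat" where
  "calK N \<nu>t = shiftK_int N \<lfloor>\<nu>t\<rfloor> * Knu N (\<nu>t - of_int \<lfloor>\<nu>t\<rfloor>)"

definition Lh :: "nat \<Rightarrow> real mat" where
  "Lh N = (real N)\<^sup>2 \<cdot>\<^sub>m (shiftK N + transpose_mat (shiftK N) - 2 \<cdot>\<^sub>m 1\<^sub>m N)"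

end

theory Submission
  imports Defs
begin

text \<open>Writing P a for the permutation matrix of the cyclic shift by an integer a, the map a \<mapsto> P a
  is a group homomorphism from \<int> into the orthogonal matrices; in particular all P a commute and
  the transpose of P a is P (-a). Every calK N x is the interpolation (1 - \<theta>) P k + \<theta> P (k + 1) with
  x = k + \<theta>, so (a) and (b) hold because all matrices involved lie in the commutative span of
  the P a. Multiplying two such interpolations gives a combination of P n, P (n + 1), P (n + 2),
  which differs from the interpolation for the sum by \<nu>\<omega> (P n - 2 P (n + 1) + P (n + 2)), a shifted
  second difference. Finally, every column of P a sums to 1, hence so does every column of calK N x,
  and such matrices preserve the sum of the entries of a vector.\<close>

definition cyclic_shift_mat :: "nat \<Rightarrow> int \<Rightarrow> real mat" where
  "cyclic_shift_mat N a = mat N N (\<lambda>(i, j). if int i mod int N = (int j + a) mod int N then 1 else 0)"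

lemma cyclic_shift_mat_carrier [simp]: "cyclic_shift_mat N a \<in> carrier_mat N N"
  by (simp add: cyclic_shift_mat_def)

lemma cyclic_shift_mat_dim [simp]:
  "dim_row (cyclic_shift_mat N a) = N" "dim_col (cyclic_shift_mat N a) = N"
  by (simp_all add: cyclic_shift_mat_def)

lemma cyclic_shift_mat_index [simp]:
  "i < N \<Longrightarrow> j < N \<Longrightarrow>
    cyclic_shift_mat N a $$ (i, j) = (if int i mod int N = (int j + a) mod int N then 1 else 0)"
  by (simp add: cyclic_shift_mat_def)

lemma sum_if_mod_eq:
  assumes "0 < N"
  shows "(\<Sum>k<N. if int k mod int N = c mod int N then f k else 0) = f (nat (c mod int N))"
proof -
  have "int k mod int N = c mod int N \<longleftrightarrow> k = nat (c mod int N)" if "k < N" for k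
    using that assms by auto
  then have "(\<Sum>k<N. if int k mod int N = c mod int N then f k else 0)
      = (\<Sum>k<N. if k = nat (c mod int N) then f k else 0)"
    by (intro sum.cong) auto
  also have "\<dots> = f (nat (c mod int N))"
    using assms by (simp add: nat_less_iff)
  finally show ?thesis .
qed

lemma cyclic_shift_mat_mult: "cyclic_shift_mat N a * cyclic_shift_mat N b = cyclic_shift_mat N (a + b)"
proof (rule eq_matI)
  fix i j assume "i < dim_row (cyclic_shift_mat N (a + b))" "j < dim_col (cyclic_shift_mat N (a + b))"
  then have i: "i < N" and j: "j < N" by auto
  define k where "k = nat ((int j + b) mod int N)"
  have k: "k < N" "int k = (int j + b) mod int N"
    using j by (auto simp: k_def nat_less_iff)
  have "(cyclic_shift_mat N a * cyclic_shift_mat N b) $$ (i, j)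
      = (\<Sum>l<N. if int l mod int N = (int j + b) mod int N then cyclic_shift_mat N a $$ (i, l) else 0)"
    using i j by (auto simp: scalar_prod_def lessThan_atLeast0 intro!: sum.cong)
  also have "\<dots> = cyclic_shift_mat N a $$ (i, k)"
    unfolding k_def by (rule sum_if_mod_eq) (use j in simp)
  also have "\<dots> = cyclic_shift_mat N (a + b) $$ (i, j)"
  proof -
    have "(int k + a) mod int N = (int j + (a + b)) mod int N"
      unfolding k(2) by (simp add: mod_add_left_eq mod_add_right_eq algebra_simps)
    then show ?thesis
      using i j k by simp
  qed
  finally show "(cyclic_shift_mat N a * cyclic_shift_mat N b) $$ (i, j) = cyclic_shift_mat N (a + b) $$ (i, j)" .
qed auto

lemma cyclic_shift_mat_commute:
  "cyclic_shift_mat N a * cyclic_shift_mat N b = cyclic_shift_mat N b * cyclic_shift_mat N a"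
  by (simp add: cyclic_shift_mat_mult add.commute)

lemma transpose_cyclic_shift_mat: "transpose_mat (cyclic_shift_mat N a) = cyclic_shift_mat N (- a)"
proof (rule eq_matI)
  fix i j assume "i < dim_row (cyclic_shift_mat N (- a))" "j < dim_col (cyclic_shift_mat N (- a))"
  moreover have "int j mod int N = (int i + a) mod int N \<longleftrightarrow> int i mod int N = (int j - a) mod int N"
    by (auto simp: mod_eq_dvd_iff dvd_diff_commute algebra_simps)
  ultimately show "transpose_mat (cyclic_shift_mat N a) $$ (i, j) = cyclic_shift_mat N (- a) $$ (i, j)"
    by simp
qed auto

lemma cyclic_shift_mat_0: "cyclic_shift_mat N 0 = 1\<^sub>m N"
  by (rule eq_matI) auto

lemma shiftK_eq_cyclic_shift_mat: "shiftK N = cyclic_shift_mat N 1"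
proof (rule eq_matI)
  fix i j assume "i < dim_row (cyclic_shift_mat N 1)" "j < dim_col (cyclic_shift_mat N 1)"
  then have "i < N" "j < N" by auto
  moreover have "int ((j + 1) mod N) = (int j + 1) mod int N"
    by (simp add: zmod_int add.commute)
  ultimately show "shiftK N $$ (i, j) = cyclic_shift_mat N 1 $$ (i, j)"
    by (auto simp: shiftK_def simp flip: of_nat_eq_iff)
qed (auto simp: shiftK_def)

lemma shiftK_int_eq_cyclic_shift_mat: "shiftK_int N s = cyclic_shift_mat N s"
proof -
  have "cyclic_shift_mat N a ^\<^sub>m n = cyclic_shift_mat N (int n * a)" for a n
    by (induction n) (auto simp: cyclic_shift_mat_0 cyclic_shift_mat_mult algebra_simps)
  then show ?thesis
    by (auto simp: shiftK_int_def shiftK_eq_cyclic_shift_mat transpose_cyclic_shift_mat)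
qed

lemmas square_mat_distribs =
  add_mult_distrib_mat[where nr = N and n = N and nc = N]
  mult_add_distrib_mat[where nr = N and n = N and nc = N]
  mult_minus_distrib_mat[where nr = N and n = N and nc = N]
  mult_smult_assoc_mat[where nr = N and n = N and nc = N]
  mult_smult_distrib[where nr = N and n = N and nc = N] for N

lemma calK_eq_frac_interpolation:
  "calK N x = (1 - frac x) \<cdot>\<^sub>m cyclic_shift_mat N \<lfloor>x\<rfloor> + frac x \<cdot>\<^sub>m cyclic_shift_mat N (\<lfloor>x\<rfloor> + 1)"
proof -
  have "calK N x = cyclic_shift_mat N \<lfloor>x\<rfloor>
      * ((1 - frac x) \<cdot>\<^sub>m cyclic_shift_mat N 0 + frac x \<cdot>\<^sub>m cyclic_shift_mat N 1)"
    by (simp add: calK_def Knu_def frac_def shiftK_int_eq_cyclic_shift_mat shiftK_eq_cyclic_shift_mat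
        cyclic_shift_mat_0)
  also have "\<dots> = (1 - frac x) \<cdot>\<^sub>m cyclic_shift_mat N \<lfloor>x\<rfloor> + frac x \<cdot>\<^sub>m cyclic_shift_mat N (\<lfloor>x\<rfloor> + 1)"
    by (simp add: square_mat_distribs[where N = N] cyclic_shift_mat_mult)
  finally show ?thesis .
qed

lemma calK_eq_interpolation:
  assumes "0 \<le> \<theta>" "\<theta> \<le> 1"
  shows "calK N (of_int k + \<theta>) = (1 - \<theta>) \<cdot>\<^sub>m cyclic_shift_mat N k + \<theta> \<cdot>\<^sub>m cyclic_shift_mat N (k + 1)"
proof (cases "\<theta> = 1")
  case True
  then show ?thesis
    using calK_eq_frac_interpolation[of N "of_int (k + 1)"] by (auto intro!: eq_matI)
next
  case False
  with assms have "\<lfloor>of_int k + \<theta>\<rfloor> = k" "frac (of_int k + \<theta>) = \<theta>"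
    by (auto simp: floor_eq_iff frac_def)
  then show ?thesis
    using calK_eq_frac_interpolation[of N "of_int k + \<theta>"] by simp
qed

lemma calK_carrier [simp]: "calK N x \<in> carrier_mat N N"
  by (simp add: calK_eq_frac_interpolation)

lemma lincomb_mat_commute:
  fixes A B C :: "'a :: comm_ring mat"
  assumes carrier: "A \<in> carrier_mat N N" "B \<in> carrier_mat N N" "C \<in> carrier_mat N N"
    and "A * C = C * A" "B * C = C * B"
  shows "(a \<cdot>\<^sub>m A + b \<cdot>\<^sub>m B) * C = C * (a \<cdot>\<^sub>m A + b \<cdot>\<^sub>m B)"
proof -
  have "(a \<cdot>\<^sub>m A + b \<cdot>\<^sub>m B) * C = a \<cdot>\<^sub>m (A * C) + b \<cdot>\<^sub>m (B * C)"
    using carrier by (simp add: square_mat_distribs[where N = N])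
  also have "\<dots> = C * (a \<cdot>\<^sub>m A + b \<cdot>\<^sub>m B)"
    using carrier assms(4,5) by (simp add: square_mat_distribs[where N = N])
  finally show ?thesis .
qed

lemma lincomb_cyclic_shift_mat_commute:
  "(a \<cdot>\<^sub>m cyclic_shift_mat N k + b \<cdot>\<^sub>m cyclic_shift_mat N l) * (c \<cdot>\<^sub>m cyclic_shift_mat N m + d \<cdot>\<^sub>m cyclic_shift_mat N n)
   = (c \<cdot>\<^sub>m cyclic_shift_mat N m + d \<cdot>\<^sub>m cyclic_shift_mat N n) * (a \<cdot>\<^sub>m cyclic_shift_mat N k + b \<cdot>\<^sub>m cyclic_shift_mat N l)"
  by (intro lincomb_mat_commute[where N = N, symmetric])
    (auto intro: lincomb_mat_commute[where N = N, symmetric] cyclic_shift_mat_commute)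

lemma transpose_lincomb_mat:
  assumes "A \<in> carrier_mat n m" "B \<in> carrier_mat n m"
  shows "transpose_mat (a \<cdot>\<^sub>m A + b \<cdot>\<^sub>m B) = a \<cdot>\<^sub>m transpose_mat A + b \<cdot>\<^sub>m transpose_mat B"
  using assms by (intro eq_matI) auto

lemma transpose_calK:
  "transpose_mat (calK N x)
    = (1 - frac x) \<cdot>\<^sub>m cyclic_shift_mat N (- \<lfloor>x\<rfloor>) + frac x \<cdot>\<^sub>m cyclic_shift_mat N (- (\<lfloor>x\<rfloor> + 1))"
  unfolding calK_eq_frac_interpolation
  by (simp add: transpose_lincomb_mat[where n = N and m = N] transpose_cyclic_shift_mat)

lemma calK_commute: "calK N x * calK N y = calK N y * calK N x"
  unfolding calK_eq_frac_interpolation by (rule lincomb_cyclic_shift_mat_commute)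

lemma calK_transpose_commute: "calK N x * transpose_mat (calK N y) = transpose_mat (calK N y) * calK N x"
  unfolding calK_eq_frac_interpolation[of N x] transpose_calK by (rule lincomb_cyclic_shift_mat_commute)

lemma lincomb_cyclic_shift_mat_mult:
  "(a \<cdot>\<^sub>m cyclic_shift_mat N k + b \<cdot>\<^sub>m cyclic_shift_mat N (k + 1))
     * (c \<cdot>\<^sub>m cyclic_shift_mat N l + d \<cdot>\<^sub>m cyclic_shift_mat N (l + 1))
   = (a * c) \<cdot>\<^sub>m cyclic_shift_mat N (k + l) + (a * d + b * c) \<cdot>\<^sub>m cyclic_shift_mat N (k + l + 1)
     + (b * d) \<cdot>\<^sub>m cyclic_shift_mat N (k + l + 2)"
proof -
  have "k + (l + 1) = k + l + 1" "k + 1 + l = k + l + 1" "k + 1 + (l + 1) = k + l + 2"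
    by simp_all
  then show ?thesis
    by (simp add: square_mat_distribs[where N = N] cyclic_shift_mat_mult)
      (rule eq_matI; simp add: algebra_simps)
qed

lemma shiftK_int_mult_Lh:
  "shiftK_int N m * Lh N
    = (real N)\<^sup>2 \<cdot>\<^sub>m (cyclic_shift_mat N (m + 1) + cyclic_shift_mat N (m - 1) - 2 \<cdot>\<^sub>m cyclic_shift_mat N m)"
  by (simp add: Lh_def shiftK_int_eq_cyclic_shift_mat shiftK_eq_cyclic_shift_mat transpose_cyclic_shift_mat
      square_mat_distribs[where N = N] minus_carrier_mat cyclic_shift_mat_mult flip: cyclic_shift_mat_0)

lemma calK_mult_eq_calK_add_Laplacian:
  assumes "0 < N" "frac x + frac y \<le> 1"
  shows "calK N x * calK N y = calK N (x + y)
    + (1 / (real N)\<^sup>2) \<cdot>\<^sub>m ((frac x * frac y) \<cdot>\<^sub>m (shiftK_int N (\<lfloor>x\<rfloor> + \<lfloor>y\<rfloor> + 1) * Lh N))"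
proof -
  define n where "n = \<lfloor>x\<rfloor> + \<lfloor>y\<rfloor>"
  have "x + y = of_int n + (frac x + frac y)"
    by (simp add: n_def frac_def)
  then have sum: "calK N (x + y) = (1 - (frac x + frac y)) \<cdot>\<^sub>m cyclic_shift_mat N n
      + (frac x + frac y) \<cdot>\<^sub>m cyclic_shift_mat N (n + 1)"
    using assms(2) calK_eq_interpolation[of "frac x + frac y" N n] by simp
  have product: "calK N x * calK N y = ((1 - frac x) * (1 - frac y)) \<cdot>\<^sub>m cyclic_shift_mat N n
      + ((1 - frac x) * frac y + frac x * (1 - frac y)) \<cdot>\<^sub>m cyclic_shift_mat N (n + 1)
      + (frac x * frac y) \<cdot>\<^sub>m cyclic_shift_mat N (n + 2)"
    by (simp add: calK_eq_frac_interpolation lincomb_cyclic_shift_mat_mult n_def)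
  have "n + 1 + 1 = n + 2" "n + 1 - 1 = n"
    by simp_all
  then show ?thesis
    unfolding sum product shiftK_int_mult_Lh n_def[symmetric] using assms(1)
    by (intro eq_matI) (auto simp: algebra_simps)
qed

lemma sum_mult_mat_vec_col_stochastic:
  fixes M :: "'a :: comm_semiring_1 mat"
  assumes "M \<in> carrier_mat N N" "v \<in> carrier_vec N" "\<And>k. k < N \<Longrightarrow> (\<Sum>i<N. M $$ (i, k)) = 1"
  shows "(\<Sum>i<N. (M *\<^sub>v v) $ i) = (\<Sum>k<N. v $ k)"
proof -
  have "(\<Sum>i<N. (M *\<^sub>v v) $ i) = (\<Sum>i<N. \<Sum>k<N. M $$ (i, k) * v $ k)"
    using assms(1,2) by (auto simp: scalar_prod_def lessThan_atLeast0 intro!: sum.cong)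
  also have "\<dots> = (\<Sum>k<N. (\<Sum>i<N. M $$ (i, k)) * v $ k)"
    by (subst sum.swap) (simp add: sum_distrib_right)
  also have "\<dots> = (\<Sum>k<N. v $ k)"
    using assms(3) by simp
  finally show ?thesis .
qed

lemma col_sum_cyclic_shift_mat: "k < N \<Longrightarrow> (\<Sum>i<N. cyclic_shift_mat N a $$ (i, k)) = 1"
  using sum_if_mod_eq[of N "int k + a" "\<lambda>_. 1 :: real"] by simp

lemma col_sum_calK: "k < N \<Longrightarrow> (\<Sum>i<N. calK N x $$ (i, k)) = 1"
  by (simp add: calK_eq_frac_interpolation sum.distrib col_sum_cyclic_shift_mat
      del: cyclic_shift_mat_index flip: sum_distrib_left)

lemma sum_calK_mult_vec: "v \<in> carrier_vec N \<Longrightarrow> (\<Sum>i<N. (calK N x *\<^sub>v v) $ i) = (\<Sum>k<N. v $ k)"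
  by (rule sum_mult_mat_vec_col_stochastic) (simp_all add: col_sum_calK)

theorem lemma3p3:
  fixes N :: nat and \<nu>t \<omega>t :: real
  assumes "N \<ge> 1"
  defines "\<nu> \<equiv> \<nu>t - of_int \<lfloor>\<nu>t\<rfloor>" and "\<omega> \<equiv> \<omega>t - of_int \<lfloor>\<omega>t\<rfloor>"
  shows "calK N \<nu>t * calK N \<omega>t = calK N \<omega>t * calK N \<nu>t
    \<and> calK N \<nu>t * transpose_mat (calK N \<omega>t) = transpose_mat (calK N \<omega>t) * calK N \<nu>t
    \<and> (0 \<le> \<nu> \<and> \<nu> \<le> 1 \<and> 0 \<le> \<omega> \<and> \<omega> \<le> 1 \<and> \<nu> + \<omega> \<le> 1 \<longrightarrow>
         (\<exists>(c::real) (m::int). calK N \<nu>t * calK N \<omega>t =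
            calK N (\<nu>t + \<omega>t) + (1 / (real N)\<^sup>2) \<cdot>\<^sub>m (c \<cdot>\<^sub>m (shiftK_int N m * Lh N))))
    \<and> (\<forall>u \<in> carrier_vec N. (\<Sum>j<N. u $ j) = (\<Sum>j<N. (calK N \<nu>t *\<^sub>v u) $ j))"
proof -
  have "\<nu> = frac \<nu>t" "\<omega> = frac \<omega>t"
    by (simp_all add: \<nu>_def \<omega>_def frac_def)
  then have "\<nu> + \<omega> \<le> 1 \<longrightarrow> (\<exists>(c::real) (m::int). calK N \<nu>t * calK N \<omega>t =
      calK N (\<nu>t + \<omega>t) + (1 / (real N)\<^sup>2) \<cdot>\<^sub>m (c \<cdot>\<^sub>m (shiftK_int N m * Lh N)))"
    using calK_mult_eq_calK_add_Laplacian[of N \<nu>t \<omega>t] assms(1) by auto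
  then show ?thesis
    using calK_commute calK_transpose_commute sum_calK_mult_vec by auto
qed

end
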